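(* Let $L$ and $L_0$ be finite lattices and let $\phi: L\to L_0$ be a lattice epimorphism (surjective lattice homomorphism). For $y\in L_0$ let $\sigma(y):=\bigwedge\{x\in L:\ \phi(x)=y\}$ be its smallest pre-image. Fix a nonzero element $v\in L$ with $v=\sigma(\phi(v))$, and let $v/w$ be any prime quotient of $L$ (i.e. $w\prec v$). Let $r/s$ be a prime quotient of $L_0$ which is projective to the quotient $\phi(v)/\phi(w)$. Put $\underline{r}:=\sigma(r)$ and $\underline{s}:=\bigvee\{u\in L:\ u\le \underline{r},\ \phi(u)\le s\}$. Then $\underline{r}/\underline{s}$ is a prime quotient of $L$ and it is projective to $v/w$.
   Context: A quotient $a/b$ in a lattice is a pair with $b\le a$; it is prime if $b\prec a$ ($a$ covers $b$). A quotient $a/b$ transposes up to $c/d$ (and $c/d$ transposes down to $a/b$) if $a\wedge d=b$ and $a\vee d=c$; two quotients are transposed if one transposes up or down to the other. Two quotients are projective if they are connected by a finite sequence of quotients in which consecutive members are transposed. *)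

theory Defs
  imports Main
begin

text \<open>Quotients a/b are represented as pairs (a, b) with b \<le> a.\<close>

definition covers :: "'a::order \<Rightarrow> 'a \<Rightarrow> bool" where
  "covers b a \<longleftrightarrow> b < a \<and> \<not> (\<exists>c. b < c \<and> c < a)"

definition prime_quotient :: "'a::order \<times> 'a \<Rightarrow> bool" where
  "prime_quotient q \<longleftrightarrow> covers (snd q) (fst q)"

definition transposes_up :: "'a::lattice \<times> 'a \<Rightarrow> 'a \<times> 'a \<Rightarrow> bool" where
  "transposes_up q p \<longleftrightarrow> inf (fst q) (snd p) = snd q \<and> sup (fst q) (snd p) = fst p"

definition transposed :: "'a::lattice \<times> 'a \<Rightarrow> 'a \<times> 'a \<Rightarrow> bool" where
  "transposed q p \<longleftrightarrow> transposes_up q p \<or> transposes_up p q"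

definition projective :: "'a::lattice \<times> 'a \<Rightarrow> 'a \<times> 'a \<Rightarrow> bool" where
  "projective q p \<longleftrightarrow> transposed\<^sup>*\<^sup>* q p"

definition lattice_hom :: "('a::lattice \<Rightarrow> 'b::lattice) \<Rightarrow> bool" where
  "lattice_hom f \<longleftrightarrow> (\<forall>x y. f (sup x y) = sup (f x) (f y) \<and> f (inf x y) = inf (f x) (f y))"

end

theory Submission
  imports Defs
begin

text \<open>
  Every quotient \<open>a/b\<close> of \<open>L\<^sub>0\<close> is
  lifted to the quotient \<open>\<sigma>(a) / \<lambda>(a,b)\<close> of \<open>L\<close>, where \<open>\<sigma>(a)\<close> is the least pre-image of \<open>a\<close>
  and \<open>\<lambda>(a,b)\<close> is the largest element below \<open>\<sigma>(a)\<close> whose image lies below \<open>b\<close>.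
  Since \<open>f\<close> preserves arbitrary (finite) meets and joins, \<open>\<sigma>(a)\<close> maps onto \<open>a\<close> and, for
  \<open>b \<le> a\<close>, \<open>\<lambda>(a,b)\<close> maps onto \<open>b\<close>.

  The proof establishes three properties of this lifting:
  (1) it maps upward transpositions to upward transpositions, hence transposed
      quotients to transposed quotients and projective ones to projective ones;
  (2) it maps prime quotients to prime quotients;
  (3) if \<open>v = \<sigma>(f v)\<close> and \<open>v/w\<close> is prime, then \<open>v/w\<close> is the lift of \<open>f v / f w\<close>.
  The theorem follows: \<open>r/s\<close> is projective to \<open>f v / f w\<close>, so its lift \<open>\<sigma>(r)/\<lambda>(r,s)\<close>
  is prime and projective to the lift of \<open>f v / f w\<close>, which is \<open>v/w\<close>.
\<close>

definition least_preimage :: "('a::complete_lattice \<Rightarrow> 'b) \<Rightarrow> 'b \<Rightarrow> 'a" where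
  "least_preimage f y = Inf {x. f x = y}"

definition lift_lower :: "('a::complete_lattice \<Rightarrow> 'b::order) \<Rightarrow> 'b \<Rightarrow> 'b \<Rightarrow> 'a" where
  "lift_lower f a b = Sup {u. u \<le> least_preimage f a \<and> f u \<le> b}"

definition lift_quot :: "('a::complete_lattice \<Rightarrow> 'b::order) \<Rightarrow> 'b \<times> 'b \<Rightarrow> 'a \<times> 'a" where
  "lift_quot f q = (least_preimage f (fst q), lift_lower f (fst q) (snd q))"

lemma lattice_hom_mono:
  assumes "lattice_hom f" "x \<le> y"
  shows "f x \<le> f y"
proof -
  have "f x = f (inf x y)" using assms(2) by (simp add: inf_absorb1)
  also have "\<dots> = inf (f x) (f y)" using assms(1) unfolding lattice_hom_def by blast
  finally show ?thesis by (metis inf.orderI)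
qed

lemma surj_lattice_hom_top:
  fixes f :: "'a::bounded_lattice \<Rightarrow> 'b::bounded_lattice"
  assumes "lattice_hom f" "surj f"
  shows "f top = top"
proof -
  obtain x where x: "f x = top" using assms(2) by (metis surjD)
  have "f top = f (sup top x)" by simp
  also have "\<dots> = sup (f top) (f x)" using assms(1) unfolding lattice_hom_def by blast
  finally have "f top = sup (f top) (f x)" .
  then show ?thesis using x by simp
qed

lemma surj_lattice_hom_bot:
  fixes f :: "'a::bounded_lattice \<Rightarrow> 'b::bounded_lattice"
  assumes "lattice_hom f" "surj f"
  shows "f bot = bot"
proof -
  obtain x where x: "f x = bot" using assms(2) by (metis surjD)
  have "f bot = f (inf bot x)" by simp
  also have "\<dots> = inf (f bot) (f x)" using assms(1) unfolding lattice_hom_def by blast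
  finally have "f bot = inf (f bot) (f x)" .
  then show ?thesis using x by simp
qed

lemma lattice_hom_Inf_finite:
  fixes f :: "'a::complete_lattice \<Rightarrow> 'b::complete_lattice"
  assumes "lattice_hom f" "f top = top" "finite S"
  shows "f (Inf S) = Inf (f ` S)"
  using assms(3)
proof (induction S rule: finite_induct)
  case empty
  then show ?case using assms(2) by simp
next
  case (insert x F)
  have "f (Inf (insert x F)) = inf (f x) (f (Inf F))"
    using assms(1) unfolding lattice_hom_def by simp
  then show ?case using insert.IH by simp
qed

lemma lattice_hom_Sup_finite:
  fixes f :: "'a::complete_lattice \<Rightarrow> 'b::complete_lattice"
  assumes "lattice_hom f" "f bot = bot" "finite S"
  shows "f (Sup S) = Sup (f ` S)"
  using assms(3)
proof (induction S rule: finite_induct)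
  case empty
  then show ?case using assms(2) by simp
next
  case (insert x F)
  have "f (Sup (insert x F)) = sup (f x) (f (Sup F))"
    using assms(1) unfolding lattice_hom_def by simp
  then show ?case using insert.IH by simp
qed

context
  fixes f :: "'a::{finite, complete_lattice} \<Rightarrow> 'b::{finite, complete_lattice}"
  assumes hom: "lattice_hom f" and epi: "surj f"
begin

lemma f_sup: "f (sup x y) = sup (f x) (f y)"
  using hom unfolding lattice_hom_def by blast

lemma f_inf: "f (inf x y) = inf (f x) (f y)"
  using hom unfolding lattice_hom_def by blast

lemma f_Inf: "f (Inf S) = Inf (f ` S)"
  using lattice_hom_Inf_finite[OF hom surj_lattice_hom_top[OF hom epi]] by simp

lemma f_Sup: "f (Sup S) = Sup (f ` S)"
  using lattice_hom_Sup_finite[OF hom surj_lattice_hom_bot[OF hom epi]] by simp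

lemma least_preimage_image: "f (least_preimage f y) = y"
proof -
  obtain x0 where "f x0 = y" using epi by (metis surjD)
  then have "f ` {x. f x = y} = {y}" by (auto intro: rev_image_eqI[of x0])
  then show ?thesis unfolding least_preimage_def f_Inf by simp
qed

lemma least_preimage_le: "f x = y \<Longrightarrow> least_preimage f y \<le> x"
  unfolding least_preimage_def by (simp add: Inf_lower)

lemma least_preimage_mono:
  assumes "a \<le> c"
  shows "least_preimage f a \<le> least_preimage f c"
proof -
  have "f (inf (least_preimage f a) (least_preimage f c)) = a"
    using assms by (simp add: f_inf least_preimage_image inf_absorb1)
  then have "least_preimage f a \<le> inf (least_preimage f a) (least_preimage f c)"
    by (rule least_preimage_le)
  then show ?thesis by simp
qed

lemma lift_lower_le: "lift_lower f a b \<le> least_preimage f a"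
  unfolding lift_lower_def by (rule Sup_least) auto

lemma lift_lower_image_le: "f (lift_lower f a b) \<le> b"
  unfolding lift_lower_def f_Sup by (rule Sup_least) auto

lemma le_lift_lower: "u \<le> least_preimage f a \<Longrightarrow> f u \<le> b \<Longrightarrow> u \<le> lift_lower f a b"
  unfolding lift_lower_def by (rule Sup_upper) auto

lemma lift_lower_image:
  assumes "b \<le> a"
  shows "f (lift_lower f a b) = b"
proof -
  have "inf (least_preimage f a) (least_preimage f b) \<le> lift_lower f a b"
    by (rule le_lift_lower) (auto simp: f_inf least_preimage_image)
  then have "f (inf (least_preimage f a) (least_preimage f b)) \<le> f (lift_lower f a b)"
    by (rule lattice_hom_mono[OF hom])
  then have "b \<le> f (lift_lower f a b)"
    using assms by (simp add: f_inf least_preimage_image inf_absorb2)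
  then show ?thesis using lift_lower_image_le by (simp add: antisym)
qed

lemma lift_quot_transposes_up:
  assumes "transposes_up (a, b) (c, d)"
  shows "transposes_up (lift_quot f (a, b)) (lift_quot f (c, d))"
proof -
  have ad: "inf a d = b" and ac: "sup a d = c" using assms by (auto simp: transposes_up_def)
  let ?X = "least_preimage f a" and ?Y = "lift_lower f a b"
    and ?X' = "least_preimage f c" and ?Y' = "lift_lower f c d"
  have XX': "?X \<le> ?X'" using ac by (auto intro: least_preimage_mono)
  have fY': "f ?Y' = d" using ac by (auto intro: lift_lower_image)
  have fY: "f ?Y = b" using ad by (auto intro: lift_lower_image)
  have "inf ?X ?Y' \<le> ?Y"
    by (rule le_lift_lower) (auto simp: f_inf least_preimage_image fY' ad)
  moreover have "?Y \<le> ?Y'"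
    by (rule le_lift_lower) (use XX' lift_lower_le[of a b] fY ad in auto)
  ultimately have meet: "inf ?X ?Y' = ?Y" using lift_lower_le[of a b] by (simp add: antisym)
  have "?X' \<le> sup ?X ?Y'"
    by (rule least_preimage_le) (simp add: f_sup least_preimage_image fY' ac)
  then have join: "sup ?X ?Y' = ?X'" using XX' lift_lower_le[of c d] by (simp add: antisym)
  show ?thesis using meet join by (simp add: transposes_up_def lift_quot_def)
qed

lemma lift_quot_transposed:
  assumes "transposed q p"
  shows "transposed (lift_quot f q) (lift_quot f p)"
  using assms lift_quot_transposes_up[of "fst q" "snd q" "fst p" "snd p"]
    lift_quot_transposes_up[of "fst p" "snd p" "fst q" "snd q"]
  unfolding transposed_def by auto

lemma lift_quot_projective:
  assumes "projective q p"
  shows "projective (lift_quot f q) (lift_quot f p)"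
  using assms unfolding projective_def
proof (induction rule: rtranclp_induct)
  case base
  then show ?case by simp
next
  case (step y z)
  then show ?case by (metis lift_quot_transposed rtranclp.rtrancl_into_rtrancl)
qed

text \<open>(2) Lifting preserves prime quotients: an element strictly between \<open>\<lambda>(a,b)\<close> and
  \<open>\<sigma>(a)\<close> would map to \<open>b\<close> or to \<open>a\<close>, contradicting maximality of \<open>\<lambda>(a,b)\<close> or
  minimality of \<open>\<sigma>(a)\<close>.\<close>

lemma lift_quot_prime:
  assumes "prime_quotient (a, b)"
  shows "prime_quotient (lift_quot f (a, b))"
proof -
  have ba: "b < a" and cov: "\<not> (\<exists>c. b < c \<and> c < a)"
    using assms by (auto simp: prime_quotient_def covers_def)
  have fY: "f (lift_lower f a b) = b" using ba by (simp add: lift_lower_image)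
  have lt: "lift_lower f a b < least_preimage f a"
    using lift_lower_le[of a b] fY least_preimage_image[of a] ba by (metis order.strict_iff_order)
  have "\<not> (lift_lower f a b < z \<and> z < least_preimage f a)" for z
  proof
    assume z: "lift_lower f a b < z \<and> z < least_preimage f a"
    have "b \<le> f z" using lattice_hom_mono[OF hom, of "lift_lower f a b" z] z fY by auto
    moreover have "f z \<le> a"
      using lattice_hom_mono[OF hom, of z "least_preimage f a"] z least_preimage_image by auto
    ultimately have "f z = b \<or> f z = a" using cov by (metis order.not_eq_order_implies_strict)
    then show False
    proof
      assume "f z = b"
      then have "z \<le> lift_lower f a b" using z by (intro le_lift_lower) auto
      then show False using z by auto
    next
      assume "f z = a"
      then have "least_preimage f a \<le> z" by (rule least_preimage_le)
      then show False using z by auto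
    qed
  qed
  then show ?thesis using lt by (simp add: prime_quotient_def covers_def lift_quot_def)
qed

text \<open>(3) A prime quotient \<open>v/w\<close> with \<open>v = \<sigma>(f v)\<close> is recovered as the lift of its image:
  \<open>f w \<noteq> f v\<close> by minimality of \<open>\<sigma>(f v)\<close>, so \<open>w \<le> \<lambda>(f v, f w) < v\<close>, and \<open>v\<close> covers \<open>w\<close>.\<close>

lemma lift_quot_image:
  assumes v: "least_preimage f (f v) = v" and vw: "prime_quotient (v, w)"
  shows "lift_quot f (f v, f w) = (v, w)"
proof -
  have wv: "w < v" and cov: "\<not> (\<exists>c. w < c \<and> c < v)"
    using vw by (auto simp: prime_quotient_def covers_def)
  have "f w \<noteq> f v"
  proof
    assume "f w = f v"
    then have "least_preimage f (f v) \<le> w" by (rule least_preimage_le)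
    then show False using v wv by simp
  qed
  moreover have "f (lift_lower f (f v) (f w)) = f w"
    using wv by (simp add: lift_lower_image lattice_hom_mono[OF hom])
  ultimately have ne: "lift_lower f (f v) (f w) \<noteq> v" by metis
  have "w \<le> lift_lower f (f v) (f w)" using v wv by (simp add: le_lift_lower)
  moreover have "lift_lower f (f v) (f w) \<le> v" using lift_lower_le v by metis
  ultimately have "lift_lower f (f v) (f w) = w"
    using ne cov by (metis order.not_eq_order_implies_strict)
  then show ?thesis using v by (simp add: lift_quot_def)
qed

end

theorem lemma1:
  fixes \<phi> :: "'a::{finite, complete_lattice} \<Rightarrow> 'b::{finite, complete_lattice}"
    and \<sigma> :: "'b \<Rightarrow> 'a"
    and v w :: 'a and r s :: 'b and rl sl :: 'a
  assumes hom: "lattice_hom \<phi>" and epi: "surj \<phi>"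
    and sigma_def: "\<And>y. \<sigma> y = Inf {x. \<phi> x = y}"
    and v_nz: "v \<noteq> bot" and v_sig: "v = \<sigma> (\<phi> v)"
    and vw: "prime_quotient (v, w)"
    and rs: "prime_quotient (r, s)"
    and proj: "projective (r, s) (\<phi> v, \<phi> w)"
    and r_def: "rl = \<sigma> r"
    and s_def: "sl = Sup {u. u \<le> rl \<and> \<phi> u \<le> s}"
  shows "prime_quotient (rl, sl) \<and> projective (rl, sl) (v, w)"
proof -
  have sigma: "\<sigma> = least_preimage \<phi>" using sigma_def by (auto simp: least_preimage_def)
  have lift_rs: "(rl, sl) = lift_quot \<phi> (r, s)"
    using r_def s_def sigma by (simp add: lift_quot_def lift_lower_def)
  have lift_vw: "lift_quot \<phi> (\<phi> v, \<phi> w) = (v, w)"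
    using lift_quot_image[OF hom epi] v_sig vw sigma by simp
  show ?thesis
    using lift_quot_prime[OF hom epi rs] lift_quot_projective[OF hom epi proj]
    unfolding lift_rs lift_vw by simp
qed

end
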